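(* Let $\mathbf{F}_\Phi$ be a two-sided Scissorhand fence over the Cantor space $X$, let $H_X:X\to X$ be a continuous surjection, and let $T:\mathbf{F}_\Phi\to\mathbf{F}_\Phi$ be a continuous lifting of $H_X$. Then: (1) if $H_X$ is transitive, then $T$ is transitive; (2) if $H_X$ is minimal, then $T$ is minimal; (3) if $T$ is a homeomorphism and $H_X$ is chaotic, then $T$ is chaotic.
   Context: For $\Phi=(\varphi^L,\varphi^U)$ with $\varphi^L,\varphi^U:X\to[0,1]$, $\varphi^L$ lower semicontinuous, $\varphi^U$ upper semicontinuous, $\varphi^L\le\varphi^U$, the fence is $\mathbf{F}_\Phi=\{(x,t)\in X\times[0,1]:\varphi^L(x)\le t\le\varphi^U(x)\}$ and $\mathbf{F}_\Phi(x)=\{t:(x,t)\in\mathbf{F}_\Phi\}$. It is a two-sided Scissorhand fence if both graphs $\{(x,\varphi^U(x))\}$ and $\{(x,\varphi^L(x))\}$ are dense in $\mathbf{F}_\Phi$ and $\{x:\varphi^L(x)\ne\varphi^U(x)\}$ is dense in $X$. A map $T$ is a lifting of $H_X$ if $T(x,t)=(H_X(x),s)$ with $s\in\mathbf{F}_\Phi(H_X(x))$ for all $(x,t)\in\mathbf{F}_\Phi$. Transitive: there is a point with dense orbit; minimal: every orbit is dense; chaotic (Devaney): transitive with a dense set of periodic points. *)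

theory Defs
  imports "HOL-Analysis.Analysis"
begin

definition cantor_top :: "(nat \<Rightarrow> bool) topology" where
  "cantor_top = product_topology (\<lambda>_. discrete_topology (UNIV :: bool set)) UNIV"

definition lsc_on :: "'a topology \<Rightarrow> ('a \<Rightarrow> real) \<Rightarrow> bool" where
  "lsc_on Top f \<longleftrightarrow> (\<forall>a. openin Top {x \<in> topspace Top. a < f x})"

definition usc_on :: "'a topology \<Rightarrow> ('a \<Rightarrow> real) \<Rightarrow> bool" where
  "usc_on Top f \<longleftrightarrow> (\<forall>a. openin Top {x \<in> topspace Top. f x < a})"

definition fence_pair :: "((nat \<Rightarrow> bool) \<Rightarrow> real) \<Rightarrow> ((nat \<Rightarrow> bool) \<Rightarrow> real) \<Rightarrow> bool" where
  "fence_pair phiL phiU \<longleftrightarrow>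
     (\<forall>x. 0 \<le> phiL x \<and> phiL x \<le> phiU x \<and> phiU x \<le> 1) \<and>
     lsc_on cantor_top phiL \<and> usc_on cantor_top phiU"

definition fence :: "((nat \<Rightarrow> bool) \<Rightarrow> real) \<Rightarrow> ((nat \<Rightarrow> bool) \<Rightarrow> real) \<Rightarrow> ((nat \<Rightarrow> bool) \<times> real) set" where
  "fence phiL phiU = {(x, t). t \<in> {0..1} \<and> phiL x \<le> t \<and> t \<le> phiU x}"

definition fence_fiber :: "((nat \<Rightarrow> bool) \<Rightarrow> real) \<Rightarrow> ((nat \<Rightarrow> bool) \<Rightarrow> real) \<Rightarrow> (nat \<Rightarrow> bool) \<Rightarrow> real set" where
  "fence_fiber phiL phiU x = {t. (x, t) \<in> fence phiL phiU}"

definition fence_top :: "((nat \<Rightarrow> bool) \<Rightarrow> real) \<Rightarrow> ((nat \<Rightarrow> bool) \<Rightarrow> real) \<Rightarrow> ((nat \<Rightarrow> bool) \<times> real) topology" where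
  "fence_top phiL phiU = subtopology (prod_topology cantor_top euclideanreal) (fence phiL phiU)"

definition two_sided_scissorhand :: "((nat \<Rightarrow> bool) \<Rightarrow> real) \<Rightarrow> ((nat \<Rightarrow> bool) \<Rightarrow> real) \<Rightarrow> bool" where
  "two_sided_scissorhand phiL phiU \<longleftrightarrow>
     fence_pair phiL phiU \<and>
     fence_top phiL phiU closure_of {(x, phiU x) | x. True} = fence phiL phiU \<and>
     fence_top phiL phiU closure_of {(x, phiL x) | x. True} = fence phiL phiU \<and>
     cantor_top closure_of {x. phiL x \<noteq> phiU x} = topspace cantor_top"

definition is_lifting ::
  "((nat \<Rightarrow> bool) \<Rightarrow> real) \<Rightarrow> ((nat \<Rightarrow> bool) \<Rightarrow> real) \<Rightarrow> ((nat \<Rightarrow> bool) \<Rightarrow> (nat \<Rightarrow> bool))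
    \<Rightarrow> ((nat \<Rightarrow> bool) \<times> real \<Rightarrow> (nat \<Rightarrow> bool) \<times> real) \<Rightarrow> bool" where
  "is_lifting phiL phiU H T \<longleftrightarrow>
     (\<forall>x t. (x, t) \<in> fence phiL phiU \<longrightarrow>
        (\<exists>s. s \<in> fence_fiber phiL phiU (H x) \<and> T (x, t) = (H x, s)))"

definition orbit :: "('a \<Rightarrow> 'a) \<Rightarrow> 'a \<Rightarrow> 'a set" where
  "orbit f p = {(f ^^ n) p | n. True}"

definition transitive_on :: "'a topology \<Rightarrow> ('a \<Rightarrow> 'a) \<Rightarrow> bool" where
  "transitive_on Top f \<longleftrightarrow> (\<exists>p \<in> topspace Top. Top closure_of orbit f p = topspace Top)"

definition minimal_on :: "'a topology \<Rightarrow> ('a \<Rightarrow> 'a) \<Rightarrow> bool" where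
  "minimal_on Top f \<longleftrightarrow> (\<forall>p \<in> topspace Top. Top closure_of orbit f p = topspace Top)"

definition periodic_points :: "'a topology \<Rightarrow> ('a \<Rightarrow> 'a) \<Rightarrow> 'a set" where
  "periodic_points Top f = {p \<in> topspace Top. \<exists>n>0. (f ^^ n) p = p}"

definition chaotic_on :: "'a topology \<Rightarrow> ('a \<Rightarrow> 'a) \<Rightarrow> bool" where
  "chaotic_on Top f \<longleftrightarrow> transitive_on Top f \<and>
     Top closure_of periodic_points Top f = topspace Top"

end

theory Submission
  imports Defs
begin

text \<open>The density of both boundary graphs, combined with the semicontinuity of
  \<open>phiL\<close> and \<open>phiU\<close>, forces every nonempty open subset of the fence to contain a whole
  vertical tube \<open>{(x, t) \<in> F. x \<in> N}\<close> over a nonempty open set \<open>N\<close> of the Cantor space.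
  Since \<open>T\<close> maps fibres to fibres, the orbit of \<open>(p, t)\<close> meets every such tube as soon as
  the \<open>H\<close>-orbit of \<open>p\<close> is dense; this gives transitivity and minimality. Periodic points
  lift because \<open>T\<^sup>k\<close> maps the fibre segment over a point \<open>q\<close> with \<open>H\<^sup>k q = q\<close>
  continuously into itself and so fixes a point of it.\<close>

lemma topspace_cantor_top [simp]: "topspace cantor_top = UNIV"
  by (simp add: cantor_top_def)

lemma topspace_fence_top [simp]: "topspace (fence_top phiL phiU) = fence phiL phiU"
  by (simp add: fence_top_def)

lemma two_sided_scissorhand_fence_pair:
  "two_sided_scissorhand phiL phiU \<Longrightarrow> fence_pair phiL phiU"
  by (simp add: two_sided_scissorhand_def)

lemma fence_pair_openin_level_sets:
  assumes "fence_pair phiL phiU"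
  shows "openin cantor_top {x. phiU x < a}" "openin cantor_top {x. a < phiL x}"
  using assms unfolding fence_pair_def lsc_on_def usc_on_def by auto

lemma fence_pair_mem_fence_iff:
  assumes "fence_pair phiL phiU"
  shows "(x, t) \<in> fence phiL phiU \<longleftrightarrow> t \<in> {phiL x..phiU x}"
proof -
  have "0 \<le> phiL x" "phiU x \<le> 1"
    using assms unfolding fence_pair_def by auto
  then show ?thesis
    unfolding fence_def by auto
qed

lemma openin_fence_top_Times:
  assumes "openin cantor_top C"
  shows "openin (fence_top phiL phiU) ((C \<times> {a<..<b}) \<inter> fence phiL phiU)"
  unfolding fence_top_def openin_subtopology
  using assms by (intro exI[of _ "C \<times> {a<..<b}"]) (auto simp: openin_prod_Times_iff)

lemma dense_graph_approximates:
  assumes dense: "fence_top phiL phiU closure_of {(x, f x) | x. True} = fence phiL phiU"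
    and xt: "(x, t) \<in> fence phiL phiU" and C: "openin cantor_top C" "x \<in> C" and "e > 0"
  obtains y where "y \<in> C" "(y, f y) \<in> fence phiL phiU" "\<bar>f y - t\<bar> < e"
proof -
  let ?B = "(C \<times> {t - e<..<t + e}) \<inter> fence phiL phiU"
  have "openin (fence_top phiL phiU) ?B"
    using openin_fence_top_Times[OF C(1)] .
  moreover have "(x, t) \<in> ?B"
    using xt C(2) \<open>e > 0\<close> by auto
  moreover have "fence_top phiL phiU closure_of {(x, f x) | x. True} = topspace (fence_top phiL phiU)"
    using dense by simp
  ultimately have "{(x, f x) | x. True} \<inter> ?B \<noteq> {}"
    unfolding dense_intersects_open by blast
  then show thesis
    using that unfolding abs_diff_less_iff by fastforce
qed

lemma openin_fence_top_contains_box: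
  assumes U: "openin (fence_top phiL phiU) U" "(x0, t0) \<in> U"
  obtains C e where "openin cantor_top C" "x0 \<in> C" "e > 0"
    "(C \<times> {t0 - e<..<t0 + e}) \<inter> fence phiL phiU \<subseteq> U"
proof -
  obtain W where W: "openin (prod_topology cantor_top euclideanreal) W" "U = W \<inter> fence phiL phiU"
    using U(1) unfolding fence_top_def openin_subtopology by auto
  then obtain C V where C: "openin cantor_top C" "x0 \<in> C"
    and V: "open V" "t0 \<in> V" and CV: "C \<times> V \<subseteq> W"
    using U(2) unfolding openin_prod_topology_alt by (metis IntD1 open_openin)
  obtain e where "e > 0" "{t0 - e<..<t0 + e} \<subseteq> V"
    using V open_contains_ball_eq ball_eq_greaterThanLessThan by metis
  then show thesis
    using that[OF C \<open>e > 0\<close>] CV W(2) by blast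
qed

lemma openin_fence_top_contains_tube:
  assumes S: "two_sided_scissorhand phiL phiU"
    and U: "openin (fence_top phiL phiU) U" "U \<noteq> {}"
  obtains N where "openin cantor_top N" "N \<noteq> {}"
    "\<And>x t. x \<in> N \<Longrightarrow> (x, t) \<in> fence phiL phiU \<Longrightarrow> (x, t) \<in> U"
proof -
  have dense_upper: "fence_top phiL phiU closure_of {(x, phiU x) | x. True} = fence phiL phiU"
    and dense_lower: "fence_top phiL phiU closure_of {(x, phiL x) | x. True} = fence phiL phiU"
    using S unfolding two_sided_scissorhand_def by auto
  note fp = two_sided_scissorhand_fence_pair[OF S]
  obtain x0 t0 where x0t0: "(x0, t0) \<in> U"
    using U(2) by auto
  then have "(x0, t0) \<in> fence phiL phiU"
    using U(1) openin_subset by fastforce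
  obtain C e where C: "openin cantor_top C" "x0 \<in> C" and "e > 0"
    and box: "(C \<times> {t0 - e<..<t0 + e}) \<inter> fence phiL phiU \<subseteq> U"
    using openin_fence_top_contains_box[OF U(1) x0t0] .
  have "e/3 > 0"
    using \<open>e > 0\<close> by simp
  txt \<open>Approximate \<open>t0\<close> first by \<open>phiU y\<close>, then \<open>phiU y\<close> by \<open>phiL z\<close> with \<open>phiU z\<close> still
    below \<open>phiU y + e/3\<close>: the whole fibre over \<open>z\<close> is then within \<open>e\<close> of \<open>t0\<close>, and
    semicontinuity keeps this true on a neighbourhood of \<open>z\<close>.\<close>
  obtain y where y: "y \<in> C" "(y, phiU y) \<in> fence phiL phiU" "\<bar>phiU y - t0\<bar> < e/3"
    using dense_graph_approximates[OF dense_upper \<open>(x0, t0) \<in> fence phiL phiU\<close> C \<open>e/3 > 0\<close>] .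
  define N' where "N' = C \<inter> {x. phiU x < phiU y + e/3}"
  have N': "openin cantor_top N'" "y \<in> N'"
    unfolding N'_def using fence_pair_openin_level_sets(1)[OF fp] C(1) y(1) \<open>e > 0\<close>
    by (auto intro: openin_Int)
  obtain z where z: "z \<in> N'" "\<bar>phiL z - phiU y\<bar> < e/3"
    using dense_graph_approximates[OF dense_lower y(2) N' \<open>e/3 > 0\<close>] .
  define N where "N = C \<inter> {x. phiU x < t0 + e} \<inter> {x. t0 - e < phiL x}"
  show thesis
  proof
    show "openin cantor_top N"
      unfolding N_def using fence_pair_openin_level_sets[OF fp] C(1) by (intro openin_Int)
    have "phiU y - e/3 < phiL z" "t0 - e/3 < phiU y" "phiU y < t0 + e/3"
      using z(2) y(3) unfolding abs_diff_less_iff by linarith+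
    then have "z \<in> N"
      using z(1) unfolding N_def N'_def by auto
    then show "N \<noteq> {}"
      by auto
    fix x t assume "x \<in> N" "(x, t) \<in> fence phiL phiU"
    then show "(x, t) \<in> U"
      using box unfolding N_def fence_def by auto
  qed
qed

lemma lifting_funpow:
  assumes L: "is_lifting phiL phiU H T" and xt: "(x, t) \<in> fence phiL phiU"
  shows "(T ^^ n) (x, t) \<in> fence phiL phiU \<and> fst ((T ^^ n) (x, t)) = (H ^^ n) x"
proof (induction n)
  case 0
  then show ?case using xt by simp
next
  case (Suc n)
  obtain y u where yu: "(T ^^ n) (x, t) = (y, u)" "(y, u) \<in> fence phiL phiU" "y = (H ^^ n) x"
    using Suc by (metis prod.collapse)
  then obtain s where "s \<in> fence_fiber phiL phiU (H y)" "T (y, u) = (H y, s)"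
    using L unfolding is_lifting_def by blast
  then show ?case
    using yu by (simp add: fence_fiber_def)
qed

lemma lifting_dense_orbit:
  assumes S: "two_sided_scissorhand phiL phiU" and L: "is_lifting phiL phiU H T"
    and dense: "cantor_top closure_of orbit H p = topspace cantor_top"
    and pt: "(p, t) \<in> fence phiL phiU"
  shows "fence_top phiL phiU closure_of orbit T (p, t) = topspace (fence_top phiL phiU)"
  unfolding dense_intersects_open
proof (intro allI impI)
  fix U assume "openin (fence_top phiL phiU) U \<and> U \<noteq> {}"
  then obtain N where N: "openin cantor_top N" "N \<noteq> {}"
      "\<And>x s. x \<in> N \<Longrightarrow> (x, s) \<in> fence phiL phiU \<Longrightarrow> (x, s) \<in> U"
    using openin_fence_top_contains_tube[OF S] by metis
  then obtain n where n: "(H ^^ n) p \<in> N"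
    using dense unfolding dense_intersects_open orbit_def by blast
  have "(T ^^ n) (p, t) \<in> U"
    using lifting_funpow[OF L pt, of n] N(3)[OF n] by (metis prod.collapse)
  then show "orbit T (p, t) \<inter> U \<noteq> {}"
    unfolding orbit_def by blast
qed

lemma continuous_map_funpow:
  assumes "continuous_map X X f"
  shows "continuous_map X X (f ^^ n)"
proof (induction n)
  case 0
  then show ?case by (simp add: id_def[symmetric])
next
  case (Suc n)
  then show ?case
    unfolding funpow.simps(2) by (rule continuous_map_compose[OF _ assms])
qed

lemma lifting_periodic_point:
  assumes fp: "fence_pair phiL phiU" and L: "is_lifting phiL phiU H T"
    and contT: "continuous_map (fence_top phiL phiU) (fence_top phiL phiU) T"
    and q: "(H ^^ k) q = q"
  obtains s where "(q, s) \<in> fence phiL phiU" "(T ^^ k) (q, s) = (q, s)"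
proof -
  let ?I = "{phiL q..phiU q}"
  note fibre = fence_pair_mem_fence_iff[OF fp, of q]
  define g where "g s = snd ((T ^^ k) (q, s))" for s
  have Tk_fibre: "(T ^^ k) (q, s) = (q, g s) \<and> g s \<in> ?I" if "s \<in> ?I" for s
    using lifting_funpow[OF L fibre[THEN iffD2, OF that], of k] q fibre
    unfolding g_def by (metis prod.collapse)
  have "continuous_map (top_of_set ?I) (fence_top phiL phiU) (\<lambda>s. (q, s))"
    unfolding fence_top_def continuous_map_in_subtopology continuous_map_pairwise
    using fibre by (auto simp: o_def)
  then have "continuous_map (top_of_set ?I) (fence_top phiL phiU) ((T ^^ k) \<circ> (\<lambda>s. (q, s)))"
    using continuous_map_compose continuous_map_funpow[OF contT] by blast
  moreover have "continuous_map (fence_top phiL phiU) euclideanreal snd"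
    unfolding fence_top_def by (rule continuous_map_from_subtopology[OF continuous_map_snd])
  ultimately have "continuous_map (top_of_set ?I) euclideanreal g"
    using continuous_map_compose unfolding g_def by (fastforce simp: o_def)
  then have "continuous_on ?I g" by simp
  moreover have "?I \<noteq> {}"
    using fp unfolding fence_pair_def by auto
  ultimately obtain s where "s \<in> ?I" "g s = s"
    using brouwer[of ?I g] Tk_fibre by auto
  then show thesis
    using that Tk_fibre fibre by metis
qed

lemma lifting_dense_periodic_points:
  assumes S: "two_sided_scissorhand phiL phiU" and L: "is_lifting phiL phiU H T"
    and contT: "continuous_map (fence_top phiL phiU) (fence_top phiL phiU) T"
    and dense: "cantor_top closure_of periodic_points cantor_top H = topspace cantor_top"
  shows "fence_top phiL phiU closure_of periodic_points (fence_top phiL phiU) T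
           = topspace (fence_top phiL phiU)"
  unfolding dense_intersects_open
proof (intro allI impI)
  fix U assume "openin (fence_top phiL phiU) U \<and> U \<noteq> {}"
  then obtain N where N: "openin cantor_top N" "N \<noteq> {}"
      "\<And>x s. x \<in> N \<Longrightarrow> (x, s) \<in> fence phiL phiU \<Longrightarrow> (x, s) \<in> U"
    using openin_fence_top_contains_tube[OF S] by metis
  then obtain q k where q: "q \<in> N" "k > 0" "(H ^^ k) q = q"
    using dense unfolding dense_intersects_open periodic_points_def by blast
  obtain s where "(q, s) \<in> fence phiL phiU" "(T ^^ k) (q, s) = (q, s)"
    using lifting_periodic_point[OF two_sided_scissorhand_fence_pair[OF S] L contT q(3)] .
  then show "periodic_points (fence_top phiL phiU) T \<inter> U \<noteq> {}"
    using N(3) q unfolding periodic_points_def by auto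
qed

theorem theorem3p3:
  fixes phiL phiU :: "(nat \<Rightarrow> bool) \<Rightarrow> real"
    and H :: "(nat \<Rightarrow> bool) \<Rightarrow> (nat \<Rightarrow> bool)"
    and T :: "(nat \<Rightarrow> bool) \<times> real \<Rightarrow> (nat \<Rightarrow> bool) \<times> real"
  assumes "two_sided_scissorhand phiL phiU"
    and "continuous_map cantor_top cantor_top H"
    and "H ` topspace cantor_top = topspace cantor_top"
    and "continuous_map (fence_top phiL phiU) (fence_top phiL phiU) T"
    and "is_lifting phiL phiU H T"
  shows "(transitive_on cantor_top H \<longrightarrow> transitive_on (fence_top phiL phiU) T) \<and>
         (minimal_on cantor_top H \<longrightarrow> minimal_on (fence_top phiL phiU) T) \<and>
         (homeomorphic_map (fence_top phiL phiU) (fence_top phiL phiU) T \<and> chaotic_on cantor_top H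
            \<longrightarrow> chaotic_on (fence_top phiL phiU) T)"
proof -
  note S = assms(1) and contT = assms(4) and L = assms(5)
  have lower: "(p, phiL p) \<in> fence phiL phiU" for p
    using two_sided_scissorhand_fence_pair[OF S]
    by (simp add: fence_pair_mem_fence_iff) (simp add: fence_pair_def)
  have transitive: "transitive_on (fence_top phiL phiU) T" if "transitive_on cantor_top H"
    using that lifting_dense_orbit[OF S L _ lower] lower
    unfolding transitive_on_def by fastforce
  moreover have "minimal_on (fence_top phiL phiU) T" if "minimal_on cantor_top H"
    using that lifting_dense_orbit[OF S L]
    unfolding minimal_on_def by fastforce
  moreover have "chaotic_on (fence_top phiL phiU) T" if "chaotic_on cantor_top H"
    using that transitive lifting_dense_periodic_points[OF S L contT]
    unfolding chaotic_on_def by blast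
  ultimately show ?thesis by blast
qed

end
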